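(* Let $\alpha=(\alpha_j)_{j\ge1}$ and $\beta=(\beta_j)_{j\ge0}$ be sequences of positive numbers (or independent variables) and let $\zeta_{nk}=\zeta_{nk}(\alpha,\beta)$ be the Euler polynomials generated by $\alpha,\beta$. If $n\in\mathbf N$ and $0\le k\le n$, then $$\zeta_{nk}(\alpha,\beta)=\zeta_{n-1,k-1}(\alpha,\beta)\,\alpha_{n-k+1}+\zeta_{n-1,k}(\alpha,\beta)\,\beta_k .$$
   Context: For $\omega=(\varepsilon_1,\dots,\varepsilon_n)\in\{0,1\}^n$ define $w_n(\omega)=\prod_{m=1}^n g_m$, where, with $j=\#\{l:1\le l\le m-1,\ \varepsilon_l=0\}$, $g_m=\alpha_{m-j}$ if $\varepsilon_m=0$ and $g_m=\beta_j$ if $\varepsilon_m=1$. For $n\ge1$, $0\le k\le n$, $\zeta_{nk}(\alpha,\beta)=\sum w_n(\omega)$ over all $\omega\in\{0,1\}^n$ with exactly $k$ zeros; $\zeta_{00}=1$ and $\zeta_{nk}=0$ if $k<0$ or $k>n$. *)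

theory Defs
  imports Main "HOL-Library.FuncSet"
begin

text \<open>A word \<omega> = (\<epsilon>_1,...,\<epsilon>_n) in {0,1}^n is represented as a function
  eps :: nat => nat, extensional on {1..n} with values in {0,1}.\<close>

definition zeros_before :: "(nat \<Rightarrow> nat) \<Rightarrow> nat \<Rightarrow> nat" where
  "zeros_before eps m = card {l. 1 \<le> l \<and> l \<le> m - 1 \<and> eps l = 0}"

definition gfac :: "(nat \<Rightarrow> 'a) \<Rightarrow> (nat \<Rightarrow> 'a) \<Rightarrow> (nat \<Rightarrow> nat) \<Rightarrow> nat \<Rightarrow> 'a" where
  "gfac \<alpha> \<beta> eps m =
     (if eps m = 0 then \<alpha> (m - zeros_before eps m) else \<beta> (zeros_before eps m))"

definition wword :: "(nat \<Rightarrow> 'a::comm_monoid_mult) \<Rightarrow> (nat \<Rightarrow> 'a) \<Rightarrow> nat \<Rightarrow> (nat \<Rightarrow> nat) \<Rightarrow> 'a" where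
  "wword \<alpha> \<beta> n eps = (\<Prod>m = 1..n. gfac \<alpha> \<beta> eps m)"

definition words :: "nat \<Rightarrow> (nat \<Rightarrow> nat) set" where
  "words n = {1..n} \<rightarrow>\<^sub>E {0, 1}"

text \<open>Euler polynomials \<zeta>_{nk}(\<alpha>,\<beta>); k is an integer so that \<zeta>_{n,k}=0 for k<0 or k>n.\<close>
definition zeta :: "(nat \<Rightarrow> 'a::comm_semiring_1) \<Rightarrow> (nat \<Rightarrow> 'a) \<Rightarrow> nat \<Rightarrow> int \<Rightarrow> 'a" where
  "zeta \<alpha> \<beta> n k =
     (if k < 0 \<or> k > int n then 0
      else if n = 0 then 1
      else (\<Sum>eps \<in> {eps \<in> words n. card {l \<in> {1..n}. eps l = 0} = nat k}. wword \<alpha> \<beta> n eps))"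

end

theory Submission
  imports Defs
begin

text \<open>Split a word of length \<open>n + 1\<close> into its prefix of length \<open>n\<close> and its last
  letter. The prefix determines the factors \<open>g\<^sub>1, \<dots>, g\<^sub>n\<close>, and the last factor is
  \<open>\<alpha> (n + 1 - j)\<close> or \<open>\<beta> j\<close>, where \<open>j\<close> is the number of zeros of the prefix. A word
  with \<open>k\<close> zeros ending in \<open>0\<close> has a prefix with \<open>k - 1\<close> zeros, one ending in \<open>1\<close> a
  prefix with \<open>k\<close> zeros; summing over both kinds gives the recurrence.\<close>

definition zero_count :: "nat \<Rightarrow> (nat \<Rightarrow> nat) \<Rightarrow> nat" where
  "zero_count n eps = card {l \<in> {1..n}. eps l = 0}"

lemma finite_words: "finite (words n)"
  unfolding words_def by (intro finite_PiE) auto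

lemma zero_count_le: "zero_count n eps \<le> n"
proof -
  have "zero_count n eps \<le> card {1..n}"
    unfolding zero_count_def by (intro card_mono) auto
  then show ?thesis by simp
qed

lemma zeta_of_nat:
  "zeta \<alpha> \<beta> n (int k) = (\<Sum>eps \<in> {eps \<in> words n. zero_count n eps = k}. wword \<alpha> \<beta> n eps)"
proof (cases "k \<le> n")
  case True
  have "words 0 = {\<lambda>_. undefined}"
    unfolding words_def by auto
  with True show ?thesis
    by (cases "n = 0") (simp_all add: zeta_def zero_count_def wword_def)
next
  case False
  then have "{eps \<in> words n. zero_count n eps = k} = {}"
    using zero_count_le[of n] by fastforce
  with False show ?thesis
    by (simp only: zeta_def) simp
qed

lemma sum_words_Suc:
  "(\<Sum>eps \<in> words (Suc n). f eps)
     = (\<Sum>eps \<in> words n. f (eps(Suc n := 0))) + (\<Sum>eps \<in> words n. f (eps(Suc n := 1)))"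
proof -
  have "words (Suc n) = (\<lambda>(c, eps). eps(Suc n := c)) ` ({0, 1} \<times> words n)"
    unfolding words_def by (simp add: atLeastAtMostSuc_conv PiE_insert_eq)
  moreover have "inj_on (\<lambda>(c, eps). eps(Suc n := c)) ({0, 1} \<times> words n)"
    unfolding words_def by (rule inj_combinator) simp
  ultimately have "(\<Sum>eps \<in> words (Suc n). f eps)
      = (\<Sum>(c, eps) \<in> {0, 1} \<times> words n. f (eps(Suc n := c)))"
    by (simp add: sum.reindex case_prod_unfold)
  also have "\<dots> = (\<Sum>c \<in> {0, 1}. \<Sum>eps \<in> words n. f (eps(Suc n := c)))"
    by (simp add: sum.cartesian_product)
  finally show ?thesis
    by simp
qed

lemma zeros_before_fun_upd:
  "m \<le> Suc n \<Longrightarrow> zeros_before (eps(Suc n := c)) m = zeros_before eps m"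
  unfolding zeros_before_def by (rule arg_cong[where f = card]) auto

lemma zeros_before_Suc: "zeros_before eps (Suc n) = zero_count n eps"
  unfolding zeros_before_def zero_count_def by (rule arg_cong[where f = card]) auto

lemma zero_count_fun_upd: "zero_count n (eps(Suc n := c)) = zero_count n eps"
  unfolding zero_count_def by (rule arg_cong[where f = card]) auto

lemma zero_count_fun_upd_Suc:
  "zero_count (Suc n) (eps(Suc n := c)) = zero_count n eps + (if c = 0 then 1 else 0)"
proof -
  have "{l \<in> {1..Suc n}. (eps(Suc n := c)) l = 0}
      = {l \<in> {1..n}. eps l = 0} \<union> (if c = 0 then {Suc n} else {})"
    by auto
  then show ?thesis
    unfolding zero_count_def by (simp add: card_insert_if)
qed

lemma wword_fun_upd_Suc:
  "wword \<alpha> \<beta> (Suc n) (eps(Suc n := c))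
     = wword \<alpha> \<beta> n eps * (if c = 0 then \<alpha> (Suc n - zero_count n eps) else \<beta> (zero_count n eps))"
proof -
  have "(\<Prod>m = 1..n. gfac \<alpha> \<beta> (eps(Suc n := c)) m) = (\<Prod>m = 1..n. gfac \<alpha> \<beta> eps m)"
    by (rule prod.cong) (auto simp: gfac_def zeros_before_fun_upd)
  moreover have "gfac \<alpha> \<beta> (eps(Suc n := c)) (Suc n)
      = (if c = 0 then \<alpha> (Suc n - zero_count n eps) else \<beta> (zero_count n eps))"
    by (simp add: gfac_def zeros_before_fun_upd zeros_before_Suc zero_count_fun_upd)
  ultimately show ?thesis
    unfolding wword_def by (simp add: prod.cl_ivl_Suc)
qed

text \<open>No bound on \<open>k\<close> is needed: for \<open>k > n + 1\<close> all three terms vanish.\<close>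

lemma zeta_Suc:
  fixes \<alpha> \<beta> :: "nat \<Rightarrow> 'a::comm_semiring_1"
  shows "zeta \<alpha> \<beta> (Suc n) (int k)
           = zeta \<alpha> \<beta> n (int k - 1) * \<alpha> (Suc n - k + 1) + zeta \<alpha> \<beta> n (int k) * \<beta> k"
proof -
  let ?w = "wword \<alpha> \<beta> n"
  have "zeta \<alpha> \<beta> (Suc n) (int k)
      = (\<Sum>eps \<in> words (Suc n).
           if zero_count (Suc n) eps = k then wword \<alpha> \<beta> (Suc n) eps else 0)"
    by (simp add: zeta_of_nat sum.inter_filter finite_words)
  also have "\<dots> = (\<Sum>eps \<in> words n.
                     if zero_count n eps + 1 = k then ?w eps * \<alpha> (Suc n - zero_count n eps) else 0)
                + (\<Sum>eps \<in> words n. if zero_count n eps = k then ?w eps * \<beta> k else 0)"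
    by (simp add: sum_words_Suc zero_count_fun_upd_Suc wword_fun_upd_Suc cong: if_cong)
  also have "(\<Sum>eps \<in> words n.
                if zero_count n eps + 1 = k then ?w eps * \<alpha> (Suc n - zero_count n eps) else 0)
           = zeta \<alpha> \<beta> n (int k - 1) * \<alpha> (Suc n - k + 1)"
  proof (cases k)
    case 0
    then show ?thesis
      by (simp add: zeta_def)
  next
    case (Suc j)
    have "(\<Sum>eps \<in> words n.
             if zero_count n eps + 1 = k then ?w eps * \<alpha> (Suc n - zero_count n eps) else 0)
        = (\<Sum>eps \<in> words n. if zero_count n eps = j then ?w eps * \<alpha> (Suc n - k + 1) else 0)"
      using Suc zero_count_le[of n] by (intro sum.cong) (auto simp: Suc_diff_le)
    also have "\<dots> = zeta \<alpha> \<beta> n (int j) * \<alpha> (Suc n - k + 1)"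
      by (simp add: zeta_of_nat sum_distrib_right finite_words flip: sum.inter_filter)
    finally show ?thesis
      using Suc by simp
  qed
  also have "(\<Sum>eps \<in> words n. if zero_count n eps = k then ?w eps * \<beta> k else 0)
           = zeta \<alpha> \<beta> n (int k) * \<beta> k"
    by (simp add: zeta_of_nat sum_distrib_right finite_words flip: sum.inter_filter)
  finally show ?thesis .
qed

theorem theorem6p1:
  fixes \<alpha> \<beta> :: "nat \<Rightarrow> 'a::comm_ring_1" and n k :: nat
  assumes "n \<ge> 1" and "k \<le> n"
  shows "zeta \<alpha> \<beta> n (int k)
           = zeta \<alpha> \<beta> (n - 1) (int k - 1) * \<alpha> (n - k + 1) + zeta \<alpha> \<beta> (n - 1) (int k) * \<beta> k"
proof -
  obtain m where "n = Suc m"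
    using assms(1) by (cases n) auto
  then show ?thesis
    by (simp add: zeta_Suc)
qed

end
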